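(* Let $X$ be a compact metric space, $f\colon X\to X$ continuous, and $\varphi\in\mathcal{A}_f$. Suppose $\alpha\in\mathbb{R}$ is such that there exists $x\in X$ with $\lim_{n\to\infty}\frac1nS_n\varphi(x)=\alpha$. Then $P^*(q\varphi)\ge\alpha q$ for all $q\in\mathbb{R}$.
   Context: $S_n\varphi(x)=\sum_{k=0}^{n-1}\varphi(f^kx)$. $\mathcal{M}^f(X)$: $f$-invariant Borel probability measures; $P^*(\psi)=\sup_{\mu\in\mathcal{M}^f(X)}(h(\mu)+\int\psi\,d\mu)$ with $h$ the measure-theoretic entropy. $\mathcal{A}_f$: Borel measurable bounded $\varphi\colon X\to\mathbb{R}$ with $\mu(\overline{\mathcal{C}(\varphi)})=0$ for all $\mu\in\mathcal{M}^f(X)$, $\mathcal{C}(\varphi)$ the discontinuity set. *)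

theory Defs
  imports "HOL-Probability.Probability"
begin

definition birkhoff_sum :: "('a \<Rightarrow> 'a) \<Rightarrow> ('a \<Rightarrow> real) \<Rightarrow> nat \<Rightarrow> 'a \<Rightarrow> real" where
  "birkhoff_sum f \<phi> n x = (\<Sum>k<n. \<phi> ((f ^^ k) x))"

definition invariant_measures :: "('a::metric_space \<Rightarrow> 'a) \<Rightarrow> 'a measure set" where
  "invariant_measures f =
     {M. sets M = sets borel \<and> prob_space M \<and> f \<in> measurable M M \<and> distr M M f = M}"

definition fin_partition :: "'a measure \<Rightarrow> 'a set set \<Rightarrow> bool" where
  "fin_partition M P \<longleftrightarrow> finite P \<and> P \<subseteq> sets M \<and> disjoint P \<and> \<Union>P = space M"

(* Shannon entropy of a partition, H(P) = - sum mu(A) log mu(A)  (ln 0 = 0 gives 0 log 0 = 0) *)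
definition partition_entropy :: "'a measure \<Rightarrow> 'a set set \<Rightarrow> real" where
  "partition_entropy M P = - (\<Sum>A\<in>P. measure M A * ln (measure M A))"

definition iter_join :: "'a measure \<Rightarrow> ('a \<Rightarrow> 'a) \<Rightarrow> 'a set set \<Rightarrow> nat \<Rightarrow> 'a set set" where
  "iter_join M f P n =
     {(\<Inter>i\<in>{..<n}. (f ^^ i) -` g i) \<inter> space M | g. \<forall>i<n. g i \<in> P}"

definition entropy_partition :: "'a measure \<Rightarrow> ('a \<Rightarrow> 'a) \<Rightarrow> 'a set set \<Rightarrow> real" where
  "entropy_partition M f P =
     lim (\<lambda>n. partition_entropy M (iter_join M f P (Suc n)) / real (Suc n))"

definition ks_entropy :: "'a measure \<Rightarrow> ('a \<Rightarrow> 'a) \<Rightarrow> ereal" where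
  "ks_entropy M f = (SUP P\<in>{P. fin_partition M P}. ereal (entropy_partition M f P))"

definition pressure_star :: "('a::metric_space \<Rightarrow> 'a) \<Rightarrow> ('a \<Rightarrow> real) \<Rightarrow> ereal" where
  "pressure_star f \<psi> =
     (SUP M\<in>invariant_measures f. ks_entropy M f + ereal (integral\<^sup>L M \<psi>))"

definition discont_set :: "('a::metric_space \<Rightarrow> real) \<Rightarrow> 'a set" where
  "discont_set \<phi> = {x. \<not> isCont \<phi> x}"

definition A_class :: "('a::metric_space \<Rightarrow> 'a) \<Rightarrow> ('a \<Rightarrow> real) set" where
  "A_class f = {\<phi>. \<phi> \<in> borel_measurable borel \<and> bounded (range \<phi>) \<and>
                   (\<forall>M\<in>invariant_measures f. measure M (closure (discont_set \<phi>)) = 0)}"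

end

(*
  Along the orbit of x, the empirical measures (1/n) \<Sum>k<n. \<delta>(f^k x) have a weak-* limit point \<mu>
  along a subsequence. It is f-invariant, because the empirical means of g \<circ> f and g differ by at
  most 2 sup|g| / n. As \<phi> \<in> A_f, \<phi> is continuous off the closed \<mu>-null set closure C(\<phi>), so
  approximating \<phi> by continuous functions away from a small neighbourhood of that set shows
  that the empirical means of \<phi>, which tend to \<alpha>, also tend to \<integral>\<phi> d\<mu>. Hence
  h(\<mu>) + \<integral>q\<phi> d\<mu> \<ge> \<alpha>q, since h(\<mu>) \<ge> 0.

  Weak-* compactness is derived from Helly's selection theorem on the real line: X is coded
  injectively into the Cantor set by the ternary expansion of "x lies in the k-th ball" for a
  separating sequence of balls; the inverse of the code is uniformly continuous on its image and
  hence extends continuously to the closure (through the isometric Kuratowski embedding into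
  bounded continuous functions, a complete space).
*)

theory Submission
  imports Defs
begin

section \<open>Cantor coding of compact metric spaces\<close>

definition cantor_code :: "(nat \<Rightarrow> bool) \<Rightarrow> real" where
  "cantor_code a = (\<Sum>k. 2 * of_bool (a k) / 3 ^ Suc k)"

lemma sums_two_thirds_tail: "(\<lambda>k. 2 / 3 ^ Suc (k + m)) sums (1 / 3 ^ m :: real)"
proof -
  have "(\<lambda>k. (2 / 3 ^ Suc m) * (1/3) ^ k) sums ((2 / 3 ^ Suc m) * (1 / (1 - 1/3)) :: real)"
    by (intro sums_mult geometric_sums) auto
  then show ?thesis
    by (simp add: power_add field_simps)
qed

lemma summable_cantor_digits:
  assumes "\<And>k. \<bar>d k\<bar> \<le> 1"
  shows "summable (\<lambda>k. 2 * d k / 3 ^ Suc k :: real)"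
proof (rule summable_comparison_test)
  show "summable (\<lambda>k. 2 / 3 ^ Suc k :: real)"
    using sums_two_thirds_tail[of 0] by (simp add: sums_iff)
  show "\<exists>N. \<forall>k\<ge>N. norm (2 * d k / 3 ^ Suc k) \<le> 2 / 3 ^ Suc k"
    using assms by (auto simp: abs_mult divide_le_cancel)
qed

lemma summable_cantor_code: "summable (\<lambda>k. 2 * of_bool (a k) / 3 ^ Suc k :: real)"
  by (rule summable_cantor_digits) simp

lemma cantor_code_bounds: "cantor_code a \<in> {0..1}"
  unfolding atLeastAtMost_iff
proof
  show "0 \<le> cantor_code a"
    unfolding cantor_code_def by (intro suminf_nonneg summable_cantor_code) simp
  have ones: "(\<lambda>k. 2 / 3 ^ Suc k) sums (1::real)"
    using sums_two_thirds_tail[of 0] by simp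
  have "cantor_code a \<le> (\<Sum>k. 2 / 3 ^ Suc k)"
    unfolding cantor_code_def using ones by (intro suminf_le summable_cantor_code) (auto simp: sums_iff)
  also have "\<dots> = 1"
    using ones by (simp add: sums_iff)
  finally show "cantor_code a \<le> 1" .
qed

lemma cantor_code_eq_prefix:
  assumes close: "\<bar>cantor_code a - cantor_code b\<bar> < 1 / 3 ^ Suc K" and "k \<le> K"
  shows "a k = b k"
proof (rule ccontr)
  \<comment> \<open>The first differing digit contributes \<open>2 / 3 ^ Suc j\<close>, the whole tail at most \<open>1 / 3 ^ Suc j\<close>.\<close>
  assume "a k \<noteq> b k"
  define j where "j = (LEAST i. a i \<noteq> b i)"
  have "a j \<noteq> b j"
    unfolding j_def by (rule LeastI) fact
  have "j \<le> K"
    using Least_le[of "\<lambda>i. a i \<noteq> b i" k] \<open>a k \<noteq> b k\<close> \<open>k \<le> K\<close> unfolding j_def by linarith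
  have before: "a i = b i" if "i < j" for i
    using not_less_Least[of i "\<lambda>i. a i \<noteq> b i"] that unfolding j_def by blast
  define D :: "nat \<Rightarrow> real" where "D i = 2 * (of_bool (a i) - of_bool (b i)) / 3 ^ Suc i" for i
  have D_bound: "\<bar>of_bool (a i) - of_bool (b i) :: real\<bar> \<le> 1" for i
    by simp
  have "summable D"
    unfolding D_def by (rule summable_cantor_digits[OF D_bound])
  have "cantor_code a - cantor_code b = suminf D"
    unfolding cantor_code_def D_def right_diff_distrib diff_divide_distrib
    by (intro suminf_diff summable_cantor_code)
  also have "\<dots> = (\<Sum>n. D (n + Suc j)) + (\<Sum>i<Suc j. D i)"
    by (rule suminf_split_initial_segment[OF \<open>summable D\<close>])
  also have "(\<Sum>i<Suc j. D i) = D j"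
    using before by (simp add: D_def)
  finally have split: "cantor_code a - cantor_code b = (\<Sum>n. D (n + Suc j)) + D j" .
  have tail_sums: "(\<lambda>n. 2 / 3 ^ Suc (n + Suc j)) sums (1 / 3 ^ Suc j :: real)"
    by (rule sums_two_thirds_tail)
  have "\<bar>\<Sum>n. D (n + Suc j)\<bar> \<le> (\<Sum>n. 2 / 3 ^ Suc (n + Suc j))"
    using D_bound tail_sums
    by (intro norm_suminf_le[where 'a=real, simplified]) (auto simp: D_def abs_mult divide_le_cancel sums_iff)
  also have "\<dots> = 1 / 3 ^ Suc j"
    using tail_sums by (simp add: sums_iff)
  finally have "\<bar>\<Sum>n. D (n + Suc j)\<bar> \<le> 1 / 3 ^ Suc j" .
  moreover have "\<bar>D j\<bar> = 2 / 3 ^ Suc j"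
    using \<open>a j \<noteq> b j\<close> by (cases "a j") (auto simp: D_def)
  moreover have "1 / 3 ^ Suc K \<le> (1 / 3 ^ Suc j :: real)"
    using \<open>j \<le> K\<close> by (intro divide_left_mono power_increasing) auto
  ultimately show False
    using close split by linarith
qed

text \<open>Any base point makes \<open>dist x - dist undefined\<close> bounded; \<open>undefined\<close> is just a fixed point.\<close>

definition kuratowski_embedding :: "'a::metric_space \<Rightarrow> ('a \<Rightarrow>\<^sub>C real)" where
  "kuratowski_embedding x = Bcontfun (\<lambda>y. dist x y - dist undefined y)"

lemma apply_kuratowski_embedding:
  "apply_bcontfun (kuratowski_embedding x) = (\<lambda>y. dist x y - dist undefined y)"
proof -
  have "bounded (range (\<lambda>y. dist x y - dist undefined y))"
  proof (rule boundedI)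
    fix r assume "r \<in> range (\<lambda>y. dist x y - dist undefined y)"
    then show "norm r \<le> dist x undefined"
      using abs_dist_diff_le[of x _ undefined] by (auto simp: dist_commute[of undefined])
  qed
  then show ?thesis
    unfolding kuratowski_embedding_def
    by (intro Bcontfun_inverse) (simp add: bcontfun_def continuous_intros)
qed

lemma dist_kuratowski_embedding:
  "dist (kuratowski_embedding x) (kuratowski_embedding y) = dist x y"
proof (rule antisym)
  show "dist (kuratowski_embedding x) (kuratowski_embedding y) \<le> dist x y"
  proof (rule dist_bound)
    fix z
    show "dist (kuratowski_embedding x z) (kuratowski_embedding y z) \<le> dist x y"
      using abs_dist_diff_le[of x z y]
      by (simp add: apply_kuratowski_embedding dist_real_def dist_commute[of z y])
  qed
  show "dist x y \<le> dist (kuratowski_embedding x) (kuratowski_embedding y)"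
    using dist_bounded[of "kuratowski_embedding x" y "kuratowski_embedding y"]
    by (simp add: apply_kuratowski_embedding dist_real_def)
qed

lemma uniformly_continuous_on_extension_on_closure_compact:
  fixes h :: "'a::metric_space \<Rightarrow> 'b::metric_space"
  assumes "compact (UNIV :: 'b set)" and "uniformly_continuous_on S h"
  obtains g where "continuous_on (closure S) g" and "\<And>x. x \<in> S \<Longrightarrow> g x = h x"
proof -
  define K where "K = (kuratowski_embedding :: 'b \<Rightarrow> _)"
  have uc_K: "uniformly_continuous_on T K" for T
    unfolding uniformly_continuous_on_def K_def dist_kuratowski_embedding by blast
  have "uniformly_continuous_on S (\<lambda>x. K (h x))"
    by (rule uniformly_continuous_on_compose[OF assms(2) uc_K])
  then obtain G where G: "uniformly_continuous_on (closure S) G" "\<And>x. x \<in> S \<Longrightarrow> K (h x) = G x"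
    by (rule uniformly_continuous_on_extension_on_closure) blast
  have contK: "continuous_on UNIV K"
    by (rule uniformly_continuous_imp_continuous[OF uc_K])
  have injK: "inj K"
    by (rule injI) (metis K_def dist_eq_0_iff dist_kuratowski_embedding)
  have "G ` closure S \<subseteq> closure (G ` S)"
    by (rule image_closure_subset[OF uniformly_continuous_imp_continuous[OF G(1)]]) (auto intro: closure_subset[THEN subsetD])
  also have "\<dots> \<subseteq> closure (range K)"
    using G(2) by (intro closure_mono) (metis image_subsetI rangeI)
  also have "\<dots> = range K"
    using compact_continuous_image[OF contK assms(1)] by (simp add: compact_imp_closed)
  finally have G_range: "G ` closure S \<subseteq> range K" .
  have "continuous_on (range K) (inv K)"
    by (rule continuous_on_inv[OF contK assms(1)]) (simp add: injK)
  then have "continuous_on (closure S) (inv K \<circ> G)"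
    using G_range by (intro continuous_on_compose uniformly_continuous_imp_continuous[OF G(1)])
      (rule continuous_on_subset)
  moreover have "(inv K \<circ> G) x = h x" if "x \<in> S" for x
    using G(2)[OF that, symmetric] by (simp add: inv_f_f[OF injK])
  ultimately show ?thesis by (rule that)
qed

lemma compact_imp_separating_sequence:
  assumes "compact (UNIV :: 'a set)"
  obtains B :: "nat \<Rightarrow> 'a::metric_space set"
  where "\<And>e. e > 0 \<Longrightarrow> \<exists>K. \<forall>x y. (\<forall>k\<le>K. x \<in> B k \<longleftrightarrow> y \<in> B k) \<longrightarrow> dist x y < e"
proof -
  have "\<exists>N. finite N \<and> (UNIV :: 'a set) \<subseteq> (\<Union>c\<in>N. ball c e)" if "e > 0" for e
    using assms that unfolding compact_eq_totally_bounded by blast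
  then have "\<forall>j::nat. \<exists>N. finite N \<and> (UNIV :: 'a set) \<subseteq> (\<Union>c\<in>N. ball c (1 / Suc j))"
    by simp
  then obtain N :: "nat \<Rightarrow> 'a set" where N: "\<And>j. finite (N j)" "\<And>j. UNIV \<subseteq> (\<Union>c\<in>N j. ball c (1 / Suc j))"
    by metis
  define balls where "balls = (\<Union>j. (\<lambda>c. cball c (1 / Suc j)) ` N j)"
  have "countable balls"
    unfolding balls_def by (intro countable_UN countable_image countable_finite[OF N(1)]) simp
  define B where "B = from_nat_into balls"
  have "\<exists>K. \<forall>x y. (\<forall>k\<le>K. x \<in> B k \<longleftrightarrow> y \<in> B k) \<longrightarrow> dist x y < e" if "e > 0" for e
  proof -
    obtain j :: nat where j: "1 / Suc j < e / 2"
      using nat_approx_posE[of "e / 2"] \<open>e > 0\<close> by (metis half_gt_zero)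
    have "\<exists>n. B n = cball c (1 / Suc j)" if "c \<in> N j" for c
      unfolding B_def using \<open>countable balls\<close> that by (intro from_nat_into_surj) (auto simp: balls_def)
    then obtain idx where idx: "\<And>c. c \<in> N j \<Longrightarrow> B (idx c) = cball c (1 / Suc j)"
      by metis
    have "dist x y < e" if agree: "\<forall>k\<le>Max (idx ` N j). x \<in> B k \<longleftrightarrow> y \<in> B k" for x y
    proof -
      obtain c where c: "c \<in> N j" "dist x c < 1 / Suc j"
        using N(2)[of j] by (force simp: dist_commute)
      then have "x \<in> B (idx c)"
        by (simp add: idx dist_commute)
      moreover have "idx c \<le> Max (idx ` N j)"
        using N(1) c(1) by simp
      ultimately have "y \<in> cball c (1 / Suc j)"
        using agree idx[OF c(1)] by blast
      then show ?thesis
        using c(2) j dist_triangle2[of x y c] by (simp add: dist_commute[of y c])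
    qed
    then show ?thesis by blast
  qed
  then show ?thesis using that by blast
qed

lemma compact_metric_cantor_coding:
  assumes "compact (UNIV :: 'a set)"
  obtains E :: "'a::metric_space \<Rightarrow> real" and H :: "real \<Rightarrow> 'a"
  where "\<And>x. E x \<in> {0..1}" and "continuous_on (closure (range E)) H" and "\<And>x. H (E x) = x"
proof -
  obtain B :: "nat \<Rightarrow> 'a set"
    where sep: "\<And>e. e > 0 \<Longrightarrow> \<exists>K. \<forall>x y. (\<forall>k\<le>K. x \<in> B k \<longleftrightarrow> y \<in> B k) \<longrightarrow> dist x y < e"
    using compact_imp_separating_sequence[OF assms] by blast
  define E where "E x = cantor_code (\<lambda>k. x \<in> B k)" for x
  have close: "\<exists>d>0. \<forall>x y. \<bar>E x - E y\<bar> < d \<longrightarrow> dist x y < e" if "e > 0" for e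
  proof -
    obtain K where K: "\<And>x y. (\<forall>k\<le>K. x \<in> B k \<longleftrightarrow> y \<in> B k) \<Longrightarrow> dist x y < e"
      using sep[OF \<open>e > 0\<close>] by blast
    have "dist x y < e" if "\<bar>E x - E y\<bar> < 1 / 3 ^ Suc K" for x y
      using cantor_code_eq_prefix[OF that[unfolded E_def]] by (intro K) blast
    then show ?thesis
      by (intro exI[of _ "1 / 3 ^ Suc K"]) auto
  qed
  have "inj E"
  proof (rule injI)
    fix x y assume "E x = E y"
    then have "dist x y < e" if "e > 0" for e
      using close[OF that] by auto
    then show "x = y"
      by (metis dist_eq_0_iff less_irrefl zero_less_dist_iff)
  qed
  have "uniformly_continuous_on (range E) (inv E)"
    unfolding uniformly_continuous_on_def
  proof (intro allI impI)
    fix e :: real assume "e > 0"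
    then obtain d where "d > 0" "\<And>x y. \<bar>E x - E y\<bar> < d \<Longrightarrow> dist x y < e"
      using close by blast
    then show "\<exists>d>0. \<forall>s\<in>range E. \<forall>t\<in>range E. dist t s < d \<longrightarrow> dist (inv E t) (inv E s) < e"
      by (auto simp: inv_f_f[OF \<open>inj E\<close>] dist_real_def)
  qed
  then obtain H where H: "continuous_on (closure (range E)) H" "\<And>t. t \<in> range E \<Longrightarrow> H t = inv E t"
    by (rule uniformly_continuous_on_extension_on_closure_compact[OF assms]) blast
  show ?thesis
  proof (rule that)
    show "E x \<in> {0..1}" for x
      unfolding E_def by (rule cantor_code_bounds)
    show "H (E x) = x" for x
      using H(2)[of "E x"] inv_f_f[OF \<open>inj E\<close>] by simp
  qed (fact H(1))
qed

section \<open>Weak limits of empirical measures\<close>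

definition infdist_cutoff :: "'a::metric_space set \<Rightarrow> nat \<Rightarrow> 'a \<Rightarrow> real" where
  "infdist_cutoff F m x = max 0 (1 - real (Suc m) * infdist x F)"

lemma continuous_on_infdist_cutoff: "continuous_on UNIV (infdist_cutoff F m)"
  unfolding infdist_cutoff_def by (intro continuous_intros)

lemma infdist_cutoff_bounds: "0 \<le> infdist_cutoff F m x" "infdist_cutoff F m x \<le> 1"
  unfolding infdist_cutoff_def using infdist_nonneg[of x F] by auto

lemma tendsto_infdist_cutoff_indicator:
  fixes F :: "'a::metric_space set"
  assumes "closed F" "F \<noteq> {}"
  shows "(\<lambda>m. infdist_cutoff F m x) \<longlonglongrightarrow> indicator F x"
proof (cases "x \<in> F")
  case False
  then have "infdist x F > 0"
    using in_closed_iff_infdist_zero[OF assms] infdist_nonneg[of x F] by auto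
  then obtain m0 where m0: "1 < real m0 * infdist x F"
    by (metis reals_Archimedean3)
  have "eventually (\<lambda>m. infdist_cutoff F m x = 0) sequentially"
  proof (rule eventually_sequentiallyI)
    fix m assume "m0 \<le> m"
    then have "real m0 * infdist x F \<le> real (Suc m) * infdist x F"
      using \<open>infdist x F > 0\<close> by (intro mult_right_mono) auto
    with m0 show "infdist_cutoff F m x = 0"
      by (simp add: infdist_cutoff_def)
  qed
  then show ?thesis
    using False by (simp add: tendsto_eventually)
qed (simp add: infdist_cutoff_def infdist_zero)

lemma tendsto_integral_infdist_cutoff:
  fixes F :: "'a::metric_space set"
  assumes "finite_measure M" "sets M = sets borel" "closed F" "F \<noteq> {}"
  shows "(\<lambda>m. integral\<^sup>L M (infdist_cutoff F m)) \<longlonglongrightarrow> measure M F"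
proof -
  interpret finite_measure M by fact
  have "(\<lambda>m. integral\<^sup>L M (infdist_cutoff F m)) \<longlonglongrightarrow> integral\<^sup>L M (indicator F)"
  proof (rule integral_dominated_convergence[where w="\<lambda>_. 1"])
    show "indicator F \<in> borel_measurable M"
      using assms(3) by (simp add: measurable_cong_sets[OF assms(2) refl])
    show "infdist_cutoff F m \<in> borel_measurable M" for m
      using borel_measurable_continuous_onI[OF continuous_on_infdist_cutoff]
      by (simp add: measurable_cong_sets[OF assms(2) refl])
    show "AE x in M. norm (infdist_cutoff F m x) \<le> 1" for m
      using infdist_cutoff_bounds[of F m] by (intro AE_I2) (simp add: abs_le_iff)
    show "AE x in M. (\<lambda>m. infdist_cutoff F m x) \<longlonglongrightarrow> indicator F x"
      using tendsto_infdist_cutoff_indicator[OF assms(3,4)] by simp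
  qed simp
  then show ?thesis
    using assms(2,3) by simp
qed

lemma finite_measure_eqI_integral_continuous:
  fixes M N :: "'a::metric_space measure"
  assumes sets: "sets M = sets borel" "sets N = sets borel"
    and finite: "finite_measure M" "finite_measure N"
    and eq: "\<And>g::'a \<Rightarrow> real. continuous_on UNIV g \<Longrightarrow> (\<And>x. 0 \<le> g x \<and> g x \<le> 1) \<Longrightarrow>
               integral\<^sup>L M g = integral\<^sup>L N g"
  shows "M = N"
proof -
  have closed_eq: "emeasure M F = emeasure N F" if "closed F" for F :: "'a set"
  proof (cases "F = {}")
    case False
    have "integral\<^sup>L M (infdist_cutoff F m) = integral\<^sup>L N (infdist_cutoff F m)" for m
      using continuous_on_infdist_cutoff infdist_cutoff_bounds by (intro eq) auto
    then have "measure M F = measure N F"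
      using tendsto_integral_infdist_cutoff[OF finite(1) sets(1) \<open>closed F\<close> False]
        tendsto_integral_infdist_cutoff[OF finite(2) sets(2) \<open>closed F\<close> False]
      by (simp add: LIMSEQ_unique)
    then show ?thesis
      using finite sets \<open>closed F\<close> by (simp add: finite_measure.emeasure_eq_measure)
  qed simp
  have "sets borel = sigma_sets (UNIV :: 'a set) (Collect closed)"
    by (subst borel_eq_closed) (simp add: sets_measure_of)
  with sets show ?thesis
    by (intro measure_eqI_generator_eq[where E="Collect closed" and \<Omega>=UNIV and A="\<lambda>_. UNIV"])
      (auto simp: Int_stable_def closed_eq finite_measure.emeasure_finite[OF finite(2)])
qed

lemma Tietze_metric_real:
  fixes f :: "'a::metric_space \<Rightarrow> real"
  assumes "continuous_on S f" and "closed S" and "\<And>x. x \<in> S \<Longrightarrow> \<bar>f x\<bar> \<le> B" and "0 \<le> B"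
  obtains g where "continuous_on UNIV g" and "\<And>x. x \<in> S \<Longrightarrow> g x = f x" and "\<And>x. \<bar>g x\<bar> \<le> B"
proof -
  have normal: "normal_space (euclidean :: 'a topology)"
    by (rule metrizable_imp_normal_space[OF metrizable_space_euclidean])
  have closed: "closedin euclidean S"
    using assms(2) closed_closedin by blast
  have cont: "continuous_map (subtopology euclidean S) euclideanreal f"
    using assms(1) by simp
  have range: "f ` S \<subseteq> {-B..B}"
    using assms(3) by (force simp: abs_le_iff)
  obtain g where g: "continuous_map euclidean euclideanreal g" "\<And>x. x \<in> S \<Longrightarrow> g x = f x"
    "g ` topspace euclidean \<subseteq> {-B..B}"
    using Tietze_extension_closed_real_interval[OF normal closed cont range] assms(4) by auto
  have "\<bar>g x\<bar> \<le> B" for x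
  proof -
    have "g x \<in> {-B..B}"
      using g(3) unfolding topspace_euclidean by blast
    then show ?thesis
      by (simp add: abs_le_iff)
  qed
  with g(1,2) show ?thesis
    using that by simp
qed

definition empirical_mean :: "(nat \<Rightarrow> 'a) \<Rightarrow> nat \<Rightarrow> ('a \<Rightarrow> real) \<Rightarrow> real" where
  "empirical_mean p n g = (\<Sum>k<n. g (p k)) / real n"

definition empirical_distribution :: "(nat \<Rightarrow> real) \<Rightarrow> nat \<Rightarrow> real measure" where
  "empirical_distribution s n = distr (measure_pmf (pmf_of_set {..<n})) borel s"

lemma real_distribution_empirical_distribution:
  "n > 0 \<Longrightarrow> real_distribution (empirical_distribution s n)"
  unfolding empirical_distribution_def real_distribution_def real_distribution_axioms_def
  by (simp add: prob_space.prob_space_distr prob_space_measure_pmf)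

lemma integral_empirical_distribution:
  assumes "n > 0" and "G \<in> borel_measurable borel"
  shows "integral\<^sup>L (empirical_distribution s n) G = empirical_mean s n G"
proof -
  have "integral\<^sup>L (empirical_distribution s n) G = integral\<^sup>L (measure_pmf (pmf_of_set {..<n})) (\<lambda>k. G (s k))"
    unfolding empirical_distribution_def by (rule integral_distr) (simp_all add: assms(2))
  also have "\<dots> = empirical_mean s n G"
    unfolding empirical_mean_def using assms(1) by (subst integral_pmf_of_set) auto
  finally show ?thesis .
qed

lemma measure_empirical_distribution_eq_1:
  assumes "n > 0" and "A \<in> sets borel" and "range s \<subseteq> A"
  shows "measure (empirical_distribution s n) A = 1"
proof -
  have "s -` A = UNIV"
    using assms(3) by auto
  then show ?thesis
    unfolding empirical_distribution_def using assms(2) by (subst measure_distr) simp_all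
qed

lemma empirical_weak_limit_AE_closure:
  fixes s :: "nat \<Rightarrow> real"
  assumes "real_distribution L"
    and conv: "\<And>G. continuous_on UNIV G \<Longrightarrow> (\<And>t. \<bar>G t\<bar> \<le> 1) \<Longrightarrow>
                 (\<lambda>j. empirical_mean s (r j) G) \<longlonglongrightarrow> integral\<^sup>L L G"
  shows "AE t in L. t \<in> closure (range s)"
proof -
  interpret real_distribution L by fact
  define C where "C = closure (range s)"
  define \<psi> where "\<psi> t = min 1 (infdist t C)" for t
  have \<psi>_cont: "continuous_on UNIV \<psi>"
    unfolding \<psi>_def by (intro continuous_intros)
  have \<psi>_bound: "\<bar>\<psi> t\<bar> \<le> 1" and \<psi>_nonneg: "0 \<le> \<psi> t" for t
    unfolding \<psi>_def using infdist_nonneg[of t C] by auto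
  have "empirical_mean s n \<psi> = 0" for n
    unfolding empirical_mean_def \<psi>_def C_def by (simp add: infdist_zero closure_subset[THEN subsetD])
  then have "integral\<^sup>L L \<psi> = 0"
    using conv[OF \<psi>_cont \<psi>_bound] by (simp add: LIMSEQ_const_iff)
  moreover have "integrable L \<psi>"
    using \<psi>_bound borel_measurable_continuous_onI[OF \<psi>_cont]
    by (intro integrable_const_bound[where B=1]) (auto simp: measurable_cong_sets[OF events_eq_borel])
  ultimately have "AE t in L. \<psi> t = 0"
    using integral_nonneg_eq_0_iff_AE \<psi>_nonneg by blast
  then show ?thesis
    by eventually_elim
      (use in_closed_iff_infdist_zero[of C] in \<open>auto simp: \<psi>_def C_def min_def split: if_splits\<close>)
qed

lemma bounded_sequence_empirical_weak_limit:
  fixes s :: "nat \<Rightarrow> real"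
  assumes "bounded (range s)"
  obtains r :: "nat \<Rightarrow> nat" and L :: "real measure"
  where "strict_mono r" and "real_distribution L" and "AE t in L. t \<in> closure (range s)"
    and "\<And>G B. continuous_on UNIV G \<Longrightarrow> (\<And>t. \<bar>G t\<bar> \<le> B) \<Longrightarrow>
           (\<lambda>j. empirical_mean s (r j) G) \<longlonglongrightarrow> integral\<^sup>L L G"
proof -
  obtain M where M: "\<And>k. \<bar>s k\<bar> \<le> M"
    using assms by (metis bounded_real rangeI)
  define \<nu> where "\<nu> n = empirical_distribution s (Suc n)" for n
  have "tight \<nu>"
    unfolding tight_def
  proof (intro conjI allI impI)
    show "real_distribution (\<nu> n)" for n
      unfolding \<nu>_def by (simp add: real_distribution_empirical_distribution)
    have "s k \<in> {- M - 1<..M + 1}" for k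
      using M[of k] by (simp add: abs_le_iff)
    then have "range s \<subseteq> {- M - 1<..M + 1}"
      by blast
    then show "\<exists>a b. a < b \<and> (\<forall>n. 1 - e < measure (\<nu> n) {a<..b})" if "0 < e" for e
      using that M[of 0]
      by (intro exI[of _ "- M - 1"] exI[of _ "M + 1"]) (simp add: \<nu>_def measure_empirical_distribution_eq_1)
  qed
  then obtain r L where r: "strict_mono r" and L: "real_distribution L" "weak_conv_m (\<nu> \<circ> r) L"
    using tight_imp_convergent_subsubsequence[of \<nu> id] by (auto simp: strict_mono_def)
  have conv: "(\<lambda>j. empirical_mean s (Suc (r j)) G) \<longlonglongrightarrow> integral\<^sup>L L G"
    if "continuous_on UNIV G" "\<And>t. \<bar>G t\<bar> \<le> B" for G B
    using weak_conv_imp_integral_bdd_continuous_conv[of "\<nu> \<circ> r" L G B] that L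
      borel_measurable_continuous_onI[OF that(1)]
    by (simp add: \<nu>_def real_distribution_empirical_distribution integral_empirical_distribution
        continuous_on_eq_continuous_at)
  show ?thesis
  proof (rule that)
    show "strict_mono (Suc \<circ> r)"
      using r by (simp add: strict_mono_def)
    show "AE t in L. t \<in> closure (range s)"
      using L(1) conv by (rule empirical_weak_limit_AE_closure) (simp add: comp_def)
    show "(\<lambda>j. empirical_mean s ((Suc \<circ> r) j) G) \<longlonglongrightarrow> integral\<^sup>L L G"
      if "continuous_on UNIV G" "\<And>t. \<bar>G t\<bar> \<le> B" for G B
      using conv[OF that] by simp
  qed (fact L(1))
qed

lemma empirical_mean_tendsto_through_coding:
  fixes p :: "nat \<Rightarrow> 'a::metric_space" and E :: "'a \<Rightarrow> real"
  assumes coding: "closed C" "continuous_on C H" "\<And>x. E x \<in> C" "\<And>x. H (E x) = x"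
    and L: "real_distribution L" "AE t in L. t \<in> C"
    and conv: "\<And>G B. continuous_on UNIV G \<Longrightarrow> (\<And>t. \<bar>G t\<bar> \<le> B) \<Longrightarrow>
                 (\<lambda>j. empirical_mean (\<lambda>k. E (p k)) (r j) G) \<longlonglongrightarrow> integral\<^sup>L L G"
    and g: "continuous_on UNIV g" "\<And>x. \<bar>g x\<bar> \<le> B"
  shows "(\<lambda>j. empirical_mean p (r j) g) \<longlonglongrightarrow> integral\<^sup>L L (\<lambda>t. g (if t \<in> C then H t else undefined))"
  \<comment> \<open>The value off \<open>C\<close> is irrelevant, as \<open>L\<close> is concentrated on \<open>C\<close>.\<close>
proof -
  interpret real_distribution L by (fact L(1))
  have "continuous_on C (g \<circ> H)"
    using coding(2) g(1) by (intro continuous_on_compose) (auto elim: continuous_on_subset)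
  moreover have "0 \<le> B"
    using order_trans[OF abs_ge_zero g(2)] .
  ultimately obtain G where G: "continuous_on UNIV G" "\<And>t. t \<in> C \<Longrightarrow> G t = g (H t)" "\<And>t. \<bar>G t\<bar> \<le> B"
    using Tietze_metric_real[OF _ coding(1), of "g \<circ> H" B] g(2) by auto
  have "empirical_mean p n g = empirical_mean (\<lambda>k. E (p k)) n G" for n
    unfolding empirical_mean_def using G(2) coding(3,4) by simp
  moreover have "integral\<^sup>L L G = integral\<^sup>L L (\<lambda>t. g (if t \<in> C then H t else undefined))"
  proof (rule integral_cong_AE)
    have "(\<lambda>t. if t \<in> C then H t else undefined) \<in> borel_measurable borel"
      using coding(1,2) by (intro borel_measurable_continuous_on_if) auto
    then show "(\<lambda>t. g (if t \<in> C then H t else undefined)) \<in> borel_measurable L"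
      using borel_measurable_continuous_onI[OF g(1)] by (simp add: measurable_cong_sets[OF events_eq_borel])
    show "G \<in> borel_measurable L"
      using borel_measurable_continuous_onI[OF G(1)] by (simp add: measurable_cong_sets[OF events_eq_borel])
    show "AE t in L. G t = g (if t \<in> C then H t else undefined)"
      using L(2) by eventually_elim (simp add: G(2))
  qed
  ultimately show ?thesis
    using conv[OF G(1,3)] by simp
qed

lemma compact_empirical_mean_weak_limit:
  fixes p :: "nat \<Rightarrow> 'a::metric_space"
  assumes compact: "compact (UNIV :: 'a set)"
  obtains r :: "nat \<Rightarrow> nat" and \<mu> :: "'a measure"
  where "strict_mono r" and "sets \<mu> = sets borel" and "prob_space \<mu>"
    and "\<And>g. continuous_on UNIV g \<Longrightarrow> (\<lambda>j. empirical_mean p (r j) g) \<longlonglongrightarrow> integral\<^sup>L \<mu> g"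
proof -
  obtain E :: "'a \<Rightarrow> real" and H
    where E: "\<And>x. E x \<in> {0..1}" and H: "continuous_on (closure (range E)) H" "\<And>x. H (E x) = x"
    using compact_metric_cantor_coding[OF compact] by blast
  define C where "C = closure (range E)"
  have "bounded (range (\<lambda>k. E (p k)))"
    using E by (intro boundedI[of _ 1]) auto
  then obtain r L where r: "strict_mono r" and L: "real_distribution L"
    and L_support: "AE t in L. t \<in> closure (range (\<lambda>k. E (p k)))"
    and conv: "\<And>G B. continuous_on UNIV G \<Longrightarrow> (\<And>t. \<bar>G t\<bar> \<le> B) \<Longrightarrow>
                 (\<lambda>j. empirical_mean (\<lambda>k. E (p k)) (r j) G) \<longlonglongrightarrow> integral\<^sup>L L G"
    by (rule bounded_sequence_empirical_weak_limit) blast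
  interpret L: real_distribution L by (fact L)
  have "closure (range (\<lambda>k. E (p k))) \<subseteq> C"
    unfolding C_def by (intro closure_mono) auto
  with L_support have "AE t in L. t \<in> C"
    by (auto elim: AE_mp)
  define H' where "H' t = (if t \<in> C then H t else undefined)" for t
  have H'_measurable: "H' \<in> measurable L borel"
    unfolding H'_def measurable_cong_sets[OF L.events_eq_borel refl]
    by (rule borel_measurable_continuous_on_if) (use H(1) in \<open>auto simp: C_def\<close>)
  show ?thesis
  proof (rule that[OF r])
    show "sets (distr L borel H') = sets borel" and "prob_space (distr L borel H')"
      by (simp_all add: L.prob_space_distr[OF H'_measurable])
    fix g :: "'a \<Rightarrow> real" assume g: "continuous_on UNIV g"
    obtain B where "\<And>x. \<bar>g x\<bar> \<le> B"
      using compact_imp_bounded[OF compact_continuous_image[OF g compact]] by (metis bounded_real rangeI)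
    with g H L \<open>AE t in L. t \<in> C\<close> conv
    have "(\<lambda>j. empirical_mean p (r j) g) \<longlonglongrightarrow> integral\<^sup>L L (\<lambda>t. g (H' t))"
      unfolding H'_def C_def
      by (intro empirical_mean_tendsto_through_coding[where E=E]) (auto intro: closure_subset[THEN subsetD])
    then show "(\<lambda>j. empirical_mean p (r j) g) \<longlonglongrightarrow> integral\<^sup>L (distr L borel H') g"
      by (simp add: integral_distr[OF H'_measurable borel_measurable_continuous_onI[OF g]])
  qed
qed

section \<open>The limit measure: invariance and the integral of \<open>\<phi>\<close>\<close>

lemma empirical_mean_abs_diff_le:
  assumes "\<And>y. \<bar>\<phi> y - G y\<bar> \<le> h y"
  shows "\<bar>empirical_mean p n \<phi> - empirical_mean p n G\<bar> \<le> empirical_mean p n h"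
proof -
  have "\<bar>empirical_mean p n \<phi> - empirical_mean p n G\<bar> = \<bar>\<Sum>k<n. \<phi> (p k) - G (p k)\<bar> / real n"
    unfolding empirical_mean_def by (simp add: sum_subtractf diff_divide_distrib[symmetric] abs_divide)
  also have "\<dots> \<le> (\<Sum>k<n. h (p k)) / real n"
    using assms by (intro divide_right_mono order_trans[OF sum_abs sum_mono]) auto
  finally show ?thesis
    unfolding empirical_mean_def .
qed

lemma empirical_mean_orbit_shift:
  "empirical_mean (\<lambda>k. (f ^^ k) x) n (\<lambda>y. g (f y)) - empirical_mean (\<lambda>k. (f ^^ k) x) n g
     = (g ((f ^^ n) x) - g x) / real n"
proof -
  have "(\<Sum>k<n. g (f ((f ^^ k) x))) - (\<Sum>k<n. g ((f ^^ k) x)) = g ((f ^^ n) x) - g x"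
    using sum_lessThan_telescope[of "\<lambda>k. g ((f ^^ k) x)" n] by (simp add: sum_subtractf)
  then show ?thesis
    unfolding empirical_mean_def by (simp add: diff_divide_distrib[symmetric])
qed

lemma empirical_mean_orbit_shift_tendsto_0:
  assumes "\<And>y. \<bar>g y\<bar> \<le> B"
  shows "(\<lambda>n. empirical_mean (\<lambda>k. (f ^^ k) x) n (\<lambda>y. g (f y)) - empirical_mean (\<lambda>k. (f ^^ k) x) n g)
           \<longlonglongrightarrow> 0"
  unfolding empirical_mean_orbit_shift
proof (rule Lim_null_comparison)
  have "\<bar>g ((f ^^ n) x) - g x\<bar> \<le> 2 * B" for n
    using assms[of "(f ^^ n) x"] assms[of x] by linarith
  then show "\<forall>\<^sub>F n in sequentially. norm ((g ((f ^^ n) x) - g x) / real n) \<le> 2 * B * inverse (real n)"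
    by (simp add: divide_inverse abs_mult mult_right_mono)
  show "(\<lambda>n. 2 * B * inverse (real n)) \<longlonglongrightarrow> 0"
    by (intro tendsto_mult_right_zero tendsto_inverse_0_at_top filterlim_real_sequentially)
qed

lemma empirical_limit_invariant:
  fixes f :: "'a::metric_space \<Rightarrow> 'a"
  assumes f: "continuous_on UNIV f" and r: "strict_mono r"
    and sets: "sets \<mu> = sets borel" and prob: "prob_space \<mu>"
    and lim: "\<And>g. continuous_on UNIV g \<Longrightarrow>
                (\<lambda>j. empirical_mean (\<lambda>k. (f ^^ k) x) (r j) g) \<longlonglongrightarrow> integral\<^sup>L \<mu> g"
  shows "\<mu> \<in> invariant_measures f"
proof -
  interpret prob_space \<mu> by (fact prob)
  have f_measurable: "f \<in> measurable \<mu> \<mu>"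
    using borel_measurable_continuous_onI[OF f] by (simp add: measurable_cong_sets[OF sets sets])
  have "distr \<mu> \<mu> f = \<mu>"
  proof (rule finite_measure_eqI_integral_continuous)
    fix g :: "'a \<Rightarrow> real"
    assume g: "continuous_on UNIV g" and g01: "\<And>y. 0 \<le> g y \<and> g y \<le> 1"
    have "continuous_on UNIV (\<lambda>y. g (f y))"
      using continuous_on_compose[OF f continuous_on_subset[OF g]] by (simp add: comp_def)
    then have "(\<lambda>j. empirical_mean (\<lambda>k. (f ^^ k) x) (r j) (\<lambda>y. g (f y))
                  - empirical_mean (\<lambda>k. (f ^^ k) x) (r j) g)
               \<longlonglongrightarrow> integral\<^sup>L \<mu> (\<lambda>y. g (f y)) - integral\<^sup>L \<mu> g"
      by (intro tendsto_diff lim g)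
    moreover have "(\<lambda>j. empirical_mean (\<lambda>k. (f ^^ k) x) (r j) (\<lambda>y. g (f y))
                    - empirical_mean (\<lambda>k. (f ^^ k) x) (r j) g) \<longlonglongrightarrow> 0"
      using LIMSEQ_subseq_LIMSEQ[OF empirical_mean_orbit_shift_tendsto_0 r, of g 1 f x] g01
      by (simp add: comp_def abs_le_iff)
    ultimately have "integral\<^sup>L \<mu> (\<lambda>y. g (f y)) = integral\<^sup>L \<mu> g"
      using LIMSEQ_unique by fastforce
    then show "integral\<^sup>L (distr \<mu> \<mu> f) g = integral\<^sup>L \<mu> g"
      using borel_measurable_continuous_onI[OF g]
      by (simp add: integral_distr[OF f_measurable] measurable_cong_sets[OF sets refl])
  next
    show "finite_measure (distr \<mu> \<mu> f)"
      using prob_space_distr[OF f_measurable] by (simp add: prob_space_def)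
  qed (simp_all add: sets finite_measure_axioms)
  then show ?thesis
    unfolding invariant_measures_def using sets prob f_measurable by simp
qed

lemma continuous_approximation_off_discontinuities:
  fixes \<phi> :: "'a::metric_space \<Rightarrow> real"
  assumes B: "\<And>y. \<bar>\<phi> y\<bar> \<le> B" and "\<rho> > 0"
  obtains G h where "continuous_on UNIV G" and "\<And>y. \<bar>G y\<bar> \<le> B"
    and "continuous_on UNIV h" and "\<And>y. \<bar>\<phi> y - G y\<bar> \<le> h y"
    and "\<And>y. h y \<le> 2 * B * indicator {y. infdist y (closure (discont_set \<phi>)) < \<rho>} y"
proof -
  have "0 \<le> B"
    using order_trans[OF abs_ge_zero B] .
  define F where "F = closure (discont_set \<phi>)"
  define \<psi> where "\<psi> y = max 0 (min 1 (2 - 2 * infdist y F / \<rho>))" for y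
  have \<psi>_cont: "continuous_on UNIV (\<lambda>y. 2 * B * \<psi> y)"
    unfolding \<psi>_def using \<open>\<rho> > 0\<close> by (intro continuous_intros) auto
  have \<psi>_indicator: "2 * B * \<psi> y \<le> 2 * B * indicator {y. infdist y F < \<rho>} y" for y
  proof (cases "infdist y F < \<rho>")
    case False
    then have "\<psi> y = 0"
      using \<open>\<rho> > 0\<close> by (simp add: \<psi>_def field_simps)
    with False show ?thesis by simp
  next
    case True
    have "\<psi> y \<le> 1"
      by (simp add: \<psi>_def)
    with True \<open>0 \<le> B\<close> show ?thesis
      by (simp add: mult_left_le)
  qed
  define S where "S = {y. \<rho> / 2 \<le> infdist y F}"
  have "closed S"
    unfolding S_def by (intro closed_Collect_le continuous_intros)
  have "continuous_on S \<phi>"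
  proof (intro continuous_at_imp_continuous_on ballI)
    fix y assume "y \<in> S"
    then have "y \<notin> F"
      using \<open>\<rho> > 0\<close> by (auto simp: S_def infdist_zero)
    moreover have "discont_set \<phi> \<subseteq> F"
      unfolding F_def by (rule closure_subset)
    ultimately show "isCont \<phi> y"
      unfolding discont_set_def by auto
  qed
  then obtain G where G: "continuous_on UNIV G" "\<And>y. y \<in> S \<Longrightarrow> G y = \<phi> y" "\<And>y. \<bar>G y\<bar> \<le> B"
    using Tietze_metric_real[OF _ \<open>closed S\<close> _ \<open>0 \<le> B\<close>] B by blast
  have "\<bar>\<phi> y - G y\<bar> \<le> 2 * B * \<psi> y" for y
  proof (cases "y \<in> S")
    case False
    then have "\<psi> y = 1"
      using \<open>\<rho> > 0\<close> by (simp add: S_def \<psi>_def field_simps)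
    then show ?thesis
      using B[of y] G(3)[of y] by simp
  qed (use G(2) \<open>0 \<le> B\<close> in \<open>simp add: \<psi>_def\<close>)
  with G \<psi>_cont \<psi>_indicator show ?thesis
    using that unfolding F_def by blast
qed

lemma empirical_limit_integral_dist_le:
  fixes \<phi> :: "'a::metric_space \<Rightarrow> real"
  assumes sets: "sets \<mu> = sets borel" and prob: "prob_space \<mu>"
    and lim_cont: "\<And>g. continuous_on UNIV g \<Longrightarrow> (\<lambda>j. empirical_mean p (r j) g) \<longlonglongrightarrow> integral\<^sup>L \<mu> g"
    and \<phi>_measurable: "\<phi> \<in> borel_measurable borel" and B: "\<And>y. \<bar>\<phi> y\<bar> \<le> B"
    and lim: "(\<lambda>j. empirical_mean p (r j) \<phi>) \<longlonglongrightarrow> \<alpha>"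
    and "\<rho> > 0"
  defines "U \<equiv> {y. infdist y (closure (discont_set \<phi>)) < \<rho>}"
  shows "\<bar>\<alpha> - integral\<^sup>L \<mu> \<phi>\<bar> \<le> 4 * B * measure \<mu> U"
proof -
  interpret prob_space \<mu> by (fact prob)
  have U_sets: "U \<in> sets \<mu>"
    unfolding U_def sets by (intro borel_open open_Collect_less continuous_intros)
  have measurable: "g \<in> borel_measurable \<mu>" if "g \<in> borel_measurable borel" for g :: "'a \<Rightarrow> real"
    using that by (simp add: measurable_cong_sets[OF sets refl])
  obtain G h where G: "continuous_on UNIV G" "\<And>y. \<bar>G y\<bar> \<le> B"
    and h: "continuous_on UNIV h" "\<And>y. \<bar>\<phi> y - G y\<bar> \<le> h y" "\<And>y. h y \<le> 2 * B * indicator U y"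
    unfolding U_def by (rule continuous_approximation_off_discontinuities[of \<phi> B, OF B \<open>\<rho> > 0\<close>]) blast
  have "\<bar>h y\<bar> \<le> 2 * B" for y
    using h(2,3)[of y] order_trans[OF abs_ge_zero B] by (cases "y \<in> U") auto
  then have int_h: "integrable \<mu> h"
    by (intro integrable_const_bound[where B="2 * B"] measurable borel_measurable_continuous_onI h(1)) auto
  have int_G: "integrable \<mu> G" and int_\<phi>: "integrable \<mu> \<phi>"
    using G B borel_measurable_continuous_onI[OF G(1)] \<phi>_measurable
    by (auto intro!: integrable_const_bound[where B=B] measurable)
  have "(\<lambda>j. \<bar>empirical_mean p (r j) \<phi> - empirical_mean p (r j) G\<bar>) \<longlonglongrightarrow> \<bar>\<alpha> - integral\<^sup>L \<mu> G\<bar>"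
    by (intro tendsto_rabs tendsto_diff lim lim_cont G(1))
  then have "\<bar>\<alpha> - integral\<^sup>L \<mu> G\<bar> \<le> integral\<^sup>L \<mu> h"
    using empirical_mean_abs_diff_le[of \<phi> G h, OF h(2)]
    by (intro tendsto_le[OF trivial_limit_sequentially lim_cont[OF h(1)]]) auto
  moreover have "\<bar>integral\<^sup>L \<mu> \<phi> - integral\<^sup>L \<mu> G\<bar> \<le> integral\<^sup>L \<mu> h"
  proof -
    have "\<bar>integral\<^sup>L \<mu> \<phi> - integral\<^sup>L \<mu> G\<bar> \<le> integral\<^sup>L \<mu> (\<lambda>y. \<bar>\<phi> y - G y\<bar>)"
      using integral_abs_bound[of \<mu> "\<lambda>y. \<phi> y - G y"] by (simp add: int_G int_\<phi>)
    also have "\<dots> \<le> integral\<^sup>L \<mu> h"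
      using h(2) int_G int_\<phi> int_h by (intro integral_mono) auto
    finally show ?thesis .
  qed
  moreover have "integral\<^sup>L \<mu> h \<le> integral\<^sup>L \<mu> (\<lambda>y. 2 * B * indicator U y)"
    using int_h U_sets h(3) by (intro integral_mono) (auto simp: less_top[symmetric])
  ultimately show ?thesis
    using U_sets by simp
qed

lemma measure_infdist_neighbourhood_tendsto:
  assumes "finite_measure M" "sets M = sets borel" "closed F" "F \<noteq> {}"
  shows "(\<lambda>m. measure M {y. infdist y F < 1 / Suc m}) \<longlonglongrightarrow> measure M F"
proof -
  interpret finite_measure M by fact
  define U where "U m = {y. infdist y F < 1 / Suc m}" for m
  have "decseq U"
    unfolding decseq_def U_def by (auto elim!: less_le_trans intro!: divide_left_mono)
  moreover have "(\<Inter>m. U m) = F"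
  proof (intro equalityI subsetI)
    fix y assume y: "y \<in> (\<Inter>m. U m)"
    have "infdist y F = 0"
    proof (rule ccontr)
      assume "infdist y F \<noteq> 0"
      then obtain m where "1 / Suc m < infdist y F"
        using infdist_nonneg[of y F] nat_approx_posE by (metis less_eq_real_def)
      moreover have "infdist y F < 1 / Suc m"
        using y by (simp add: U_def)
      ultimately show False
        by linarith
    qed
    then show "y \<in> F"
      using in_closed_iff_infdist_zero[OF assms(3,4)] by simp
  qed (auto simp: U_def infdist_zero)
  moreover have "U m \<in> sets M" for m
    unfolding U_def assms(2) by (intro borel_open open_Collect_less continuous_intros)
  ultimately show ?thesis
    using finite_Lim_measure_decseq[of U] by (simp add: U_def image_subset_iff)
qed

lemma empirical_limit_integral_eq:
  fixes \<phi> :: "'a::metric_space \<Rightarrow> real"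
  assumes sets: "sets \<mu> = sets borel" and prob: "prob_space \<mu>"
    and lim_cont: "\<And>g. continuous_on UNIV g \<Longrightarrow> (\<lambda>j. empirical_mean p (r j) g) \<longlonglongrightarrow> integral\<^sup>L \<mu> g"
    and \<phi>_measurable: "\<phi> \<in> borel_measurable borel" and "bounded (range \<phi>)"
    and null: "measure \<mu> (closure (discont_set \<phi>)) = 0"
    and lim: "(\<lambda>j. empirical_mean p (r j) \<phi>) \<longlonglongrightarrow> \<alpha>"
  shows "integral\<^sup>L \<mu> \<phi> = \<alpha>"
proof (cases "closure (discont_set \<phi>) = {}")
  case True
  then have "continuous_on UNIV \<phi>"
    by (intro continuous_at_imp_continuous_on) (auto simp: discont_set_def)
  then show ?thesis
    using lim_cont lim LIMSEQ_unique by blast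
next
  case False
  obtain B where B: "\<And>y. \<bar>\<phi> y\<bar> \<le> B"
    using \<open>bounded (range \<phi>)\<close> by (metis bounded_real rangeI)
  define U where "U m = {y. infdist y (closure (discont_set \<phi>)) < 1 / Suc m}" for m
  have "(\<lambda>m. measure \<mu> (U m)) \<longlonglongrightarrow> 0"
    using measure_infdist_neighbourhood_tendsto[OF _ sets _ False] prob null
    by (simp add: U_def prob_space_def)
  then have "(\<lambda>m. 4 * B * measure \<mu> (U m)) \<longlonglongrightarrow> 0"
    by (intro tendsto_mult_right_zero)
  moreover have "\<bar>\<alpha> - integral\<^sup>L \<mu> \<phi>\<bar> \<le> 4 * B * measure \<mu> (U m)" for m
    unfolding U_def
    by (rule empirical_limit_integral_dist_le[OF sets prob lim_cont \<phi>_measurable B lim]) auto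
  ultimately have "\<bar>\<alpha> - integral\<^sup>L \<mu> \<phi>\<bar> \<le> 0"
    by (intro tendsto_lowerbound[OF _ _ trivial_limit_sequentially]) auto
  then show ?thesis
    by simp
qed

lemma ks_entropy_nonneg:
  assumes "prob_space M" "space M = UNIV"
  shows "ks_entropy M f \<ge> 0"
proof -
  interpret prob_space M by fact
  have fp: "fin_partition M {UNIV}"
    unfolding fin_partition_def using assms(2) sets.top[of M] by (auto simp: disjoint_def)
  have ij: "iter_join M f {UNIV} (Suc n) = {UNIV}" for n
    unfolding iter_join_def assms(2) by (auto intro!: exI[of _ "\<lambda>_. UNIV"])
  have pe: "partition_entropy M {UNIV} = 0"
    unfolding partition_entropy_def using prob_space assms(2) by simp
  have "entropy_partition M f {UNIV} = 0"
    unfolding entropy_partition_def ij pe by (simp add: limI)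
  then have "ereal 0 \<le> ks_entropy M f"
    unfolding ks_entropy_def using fp by (metis (mono_tags, lifting) SUP_upper mem_Collect_eq)
  then show ?thesis by (simp add: zero_ereal_def)
qed

theorem proposition9p1:
  fixes f :: "'a::metric_space \<Rightarrow> 'a" and \<phi> :: "'a \<Rightarrow> real" and \<alpha> :: real
  assumes "compact (UNIV :: 'a set)"
    and "continuous_on UNIV f"
    and "\<phi> \<in> A_class f"
    and "\<exists>x. (\<lambda>n. birkhoff_sum f \<phi> n x / real n) \<longlonglongrightarrow> \<alpha>"
  shows "\<forall>q::real. pressure_star f (\<lambda>x. q * \<phi> x) \<ge> ereal (\<alpha> * q)"
proof
  fix q :: real
  obtain x where "(\<lambda>n. birkhoff_sum f \<phi> n x / real n) \<longlonglongrightarrow> \<alpha>"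
    using assms(4) by blast
  then have lim: "(\<lambda>n. empirical_mean (\<lambda>k. (f ^^ k) x) n \<phi>) \<longlonglongrightarrow> \<alpha>"
    by (simp add: birkhoff_sum_def empirical_mean_def)
  obtain r \<mu> where r: "strict_mono r" and sets: "sets \<mu> = sets borel" and prob: "prob_space \<mu>"
    and weak: "\<And>g. continuous_on UNIV g \<Longrightarrow>
                 (\<lambda>j. empirical_mean (\<lambda>k. (f ^^ k) x) (r j) g) \<longlonglongrightarrow> integral\<^sup>L \<mu> g"
    using compact_empirical_mean_weak_limit[OF assms(1)] by metis
  have invariant: "\<mu> \<in> invariant_measures f"
    by (rule empirical_limit_invariant[OF assms(2) r sets prob weak])
  have "integral\<^sup>L \<mu> \<phi> = \<alpha>"
    using assms(3) invariant LIMSEQ_subseq_LIMSEQ[OF lim r]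
    by (intro empirical_limit_integral_eq[OF sets prob weak]) (auto simp: A_class_def comp_def)
  moreover have "0 \<le> ks_entropy \<mu> f"
    using prob sets_eq_imp_space_eq[OF sets] by (intro ks_entropy_nonneg) simp_all
  ultimately have "ereal (\<alpha> * q) \<le> ks_entropy \<mu> f + ereal (integral\<^sup>L \<mu> (\<lambda>y. q * \<phi> y))"
    using add_mono[of 0 "ks_entropy \<mu> f" "ereal (\<alpha> * q)" "ereal (\<alpha> * q)"] by (simp add: mult.commute)
  also have "\<dots> \<le> pressure_star f (\<lambda>y. q * \<phi> y)"
    unfolding pressure_star_def using invariant by (rule SUP_upper)
  finally show "pressure_star f (\<lambda>x. q * \<phi> x) \<ge> ereal (\<alpha> * q)" .
qed

end
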